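(* Let $\mathbf{k}$ be an algebraically closed field, $G=\mathrm{GL}_n$, $(\rho,M)$ a finite-dimensional rational representation, $\underline{G}=G\ltimes_\rho M$, $\underline{\mathcal{N}}=\mathcal{N}\times M$. For a partition $\lambda$ of $n$ let $J=J_\lambda$ be the Jordan standard nilpotent matrix of type $\lambda$, $G_J$ its centralizer in $G$, and $J M=\mathsf{d}\rho(J)(M)$, a $G_J$-submodule of $M$. Then: (1) for any $w\in M$, every element of $\{J\}\times(w+JM)$ lies in the $\underline{G}$-orbit of $(J,w)$; (2) $\underline{\mathcal{N}}$ has finitely many $\underline{G}$-orbits if and only if for every partition $\lambda$ of $n$, $G_{J_\lambda}$ has finitely many orbits on $M/J_\lambda M$.
   Context: $\underline{G}$ is $G\times M$ with product $(g_1,v_1)(g_2,v_2)=(g_1g_2,\rho(g_1)v_2+v_1)$, acting on $\mathfrak{gl}_n\times M$ by $\mathrm{Ad}(g,v)(X,w)=(\mathrm{Ad}(g)X,-\mathsf{d}\rho(\mathrm{Ad}(g)X)v+\rho(g)w)$. $\mathcal{N}$ is the nilpotent cone of $\mathfrak{gl}_n$. $J_\lambda$ is block diagonal with blocks $J_{\lambda_i}$ having $1$ on the superdiagonal and $0$ elsewhere. *)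

theory Defs
  imports "Jordan_Normal_Form.Jordan_Normal_Form" "HOL-Computational_Algebra.Polynomial"
begin

definition alg_closed :: "'k::field itself \<Rightarrow> bool" where
  "alg_closed _ \<longleftrightarrow> (\<forall>p :: 'k poly. degree p > 0 \<longrightarrow> (\<exists>x. poly p x = 0))"

definition GL :: "nat \<Rightarrow> 'k::field mat set" where
  "GL n = {g \<in> carrier_mat n n. invertible_mat g}"

inductive_set poly_fun :: "nat \<Rightarrow> ('k::field mat \<Rightarrow> 'k) set" for n where
  const: "(\<lambda>A. c) \<in> poly_fun n"
| coord: "i < n \<Longrightarrow> j < n \<Longrightarrow> (\<lambda>A. A $$ (i,j)) \<in> poly_fun n"
| add: "p \<in> poly_fun n \<Longrightarrow> q \<in> poly_fun n \<Longrightarrow> (\<lambda>A. p A + q A) \<in> poly_fun n"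
| mult: "p \<in> poly_fun n \<Longrightarrow> q \<in> poly_fun n \<Longrightarrow> (\<lambda>A. p A * q A) \<in> poly_fun n"

(* (rho, k^m) is a finite-dimensional rational representation of GL_n:
   a group homomorphism GL_n -> GL_m whose matrix entries are regular functions on GL_n,
   i.e. polynomials in the entries of g divided by a power of det g *)
definition rational_rep :: "nat \<Rightarrow> nat \<Rightarrow> ('k::field mat \<Rightarrow> 'k mat) \<Rightarrow> bool" where
  "rational_rep n m \<rho> \<longleftrightarrow>
     (\<forall>g \<in> GL n. \<rho> g \<in> GL m) \<and>
     \<rho> (1\<^sub>m n) = 1\<^sub>m m \<and>
     (\<forall>g \<in> GL n. \<forall>h \<in> GL n. \<rho> (g * h) = \<rho> g * \<rho> h) \<and>
     (\<exists>d::nat. \<forall>a < m. \<forall>b < m. \<exists>p \<in> poly_fun n.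
        \<forall>g \<in> GL n. \<rho> g $$ (a,b) = p g / det g ^ d)"

(* differential d rho : gl_n -> gl(k^m), X \<mapsto> d/dt|_{t=0} rho(1 + tX), computed
   algebraically: t \<mapsto> rho(1 + tX)_{ab} is a rational function q/r of t (r(0) \<noteq> 0),
   and its derivative at 0 is (q'(0) r(0) - q(0) r'(0)) / r(0)^2. *)
definition d_rep :: "nat \<Rightarrow> nat \<Rightarrow> ('k::field mat \<Rightarrow> 'k mat) \<Rightarrow> 'k mat \<Rightarrow> 'k mat" where
  "d_rep n m \<rho> X = mat m m (\<lambda>(a,b). THE D. \<exists>q r :: 'k poly. poly r 0 \<noteq> 0 \<and>
      (\<forall>t. invertible_mat (1\<^sub>m n + t \<cdot>\<^sub>m X) \<and> poly r t \<noteq> 0 \<longrightarrow>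
            \<rho> (1\<^sub>m n + t \<cdot>\<^sub>m X) $$ (a,b) = poly q t / poly r t) \<and>
      D = (coeff q 1 * coeff r 0 - coeff q 0 * coeff r 1) / (coeff r 0)^2)"

(* orbit of (X,w) in gl_n x k^m under the semidirect product G \<ltimes>_rho M, acting by
   Ad(g,v)(X,w) = (Ad(g)X, - d rho(Ad(g)X) v + rho(g) w), Ad(g)X = g X g^{-1} *)
definition semidirect_orbit :: "nat \<Rightarrow> nat \<Rightarrow> ('k::field mat \<Rightarrow> 'k mat) \<Rightarrow> 'k mat \<times> 'k vec \<Rightarrow> ('k mat \<times> 'k vec) set" where
  "semidirect_orbit n m \<rho> Xw = {(Y, - (d_rep n m \<rho> Y *\<^sub>v v) + \<rho> g *\<^sub>v snd Xw) | g v Y.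
      g \<in> GL n \<and> v \<in> carrier_vec m \<and> Y \<in> carrier_mat n n \<and> Y * g = g * fst Xw}"

definition nilcone :: "nat \<Rightarrow> 'k::field mat set" where
  "nilcone n = {X \<in> carrier_mat n n. \<exists>k. X ^\<^sub>m k = 0\<^sub>m n n}"

definition partitions :: "nat \<Rightarrow> nat list set" where
  "partitions n = {ps. sorted_wrt (\<ge>) ps \<and> (\<forall>x \<in> set ps. 0 < x) \<and> sum_list ps = n}"

definition J_mat :: "nat list \<Rightarrow> 'k::field mat" where
  "J_mat ps = jordan_matrix (map (\<lambda>k. (k, 0)) ps)"

definition centralizer :: "nat \<Rightarrow> 'k::field mat \<Rightarrow> 'k mat set" where
  "centralizer n J = {g \<in> GL n. g * J = J * g}"

definition JM :: "nat \<Rightarrow> nat \<Rightarrow> ('k::field mat \<Rightarrow> 'k mat) \<Rightarrow> 'k mat \<Rightarrow> 'k vec set" where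
  "JM n m \<rho> J = {d_rep n m \<rho> J *\<^sub>v v | v. v \<in> carrier_vec m}"

definition quot_orbits :: "nat \<Rightarrow> nat \<Rightarrow> ('k::field mat \<Rightarrow> 'k mat) \<Rightarrow> 'k mat \<Rightarrow> 'k vec set set set" where
  "quot_orbits n m \<rho> J =
     (let cosets = (\<lambda>w. (\<lambda>u. w + u) ` JM n m \<rho> J) ` carrier_vec m
      in (\<lambda>C. (\<lambda>g. (\<lambda>x. \<rho> g *\<^sub>v x) ` C) ` centralizer n J) ` cosets)"

end

theory Submission
  imports Defs "Jordan_Normal_Form.Jordan_Normal_Form_Existence"
begin

text \<open>
  The differential is computed entrywise as the derivative at \<open>t = 0\<close> of the rational function
  \<open>t \<mapsto> \<rho>(1 + tX)\<close>; over an infinite field (an algebraically closed field is infinite) this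
  derivative does not depend on how the function is written as a quotient of polynomials. From
  \<open>\<rho>(g (1 + tX) g\<^sup>-\<^sup>1) = \<rho>(g) \<rho>(1 + tX) \<rho>(g)\<^sup>-\<^sup>1\<close> one gets \<open>d\<rho>(Y) \<rho>(g) = \<rho>(g) d\<rho>(X)\<close>
  whenever \<open>Y g = g X\<close>, and this makes lying in a common orbit an equivalence relation.

  Part (1) is the action of the elements \<open>(1, v)\<close>. For part (2), every nilpotent matrix is
  conjugate to some \<open>J\<^sub>\<lambda>\<close> (triangularise it, take the Jordan normal form of the strictly upper
  triangular matrix and sort the blocks), so every orbit in \<open>\<N> \<times> M\<close> meets some \<open>{J\<^sub>\<lambda>} \<times> M\<close>.
  Two points \<open>(J, w)\<close> and \<open>(J, w')\<close> lie in one orbit iff \<open>w' + JM = \<rho>(h) w + JM\<close> for some \<open>h\<close>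
  in \<open>G\<^sub>J\<close>, so the orbits through \<open>{J} \<times> M\<close> correspond bijectively to the \<open>G\<^sub>J\<close>-orbits on
  \<open>M / JM\<close>, and there are only finitely many partitions.
\<close>

definition mat_inv :: "'k::field mat \<Rightarrow> 'k mat" where
  "mat_inv A = (1 / det A) \<cdot>\<^sub>m adj_mat A"

lemma mat_inv_carrier: "A \<in> carrier_mat n n \<Longrightarrow> mat_inv A \<in> carrier_mat n n"
  unfolding mat_inv_def using adj_mat(1) smult_carrier_mat by blast

lemma mult_mat_inv:
  assumes A: "A \<in> carrier_mat n n" and d: "det A \<noteq> 0"
  shows "A * mat_inv A = 1\<^sub>m n" and "mat_inv A * A = 1\<^sub>m n"
proof -
  have "A * mat_inv A = (1 / det A) \<cdot>\<^sub>m (A * adj_mat A)"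
    unfolding mat_inv_def by (rule mult_smult_distrib[OF A adj_mat(1)[OF A]])
  also have "\<dots> = 1\<^sub>m n"
    using adj_mat(2)[OF A] d by (auto intro!: eq_matI)
  finally show "A * mat_inv A = 1\<^sub>m n" .
  have "mat_inv A * A = (1 / det A) \<cdot>\<^sub>m (adj_mat A * A)"
    unfolding mat_inv_def by (rule mult_smult_assoc_mat[OF adj_mat(1)[OF A] A])
  also have "\<dots> = 1\<^sub>m n"
    using adj_mat(3)[OF A] d by (auto intro!: eq_matI)
  finally show "mat_inv A * A = 1\<^sub>m n" .
qed

lemma GL_iff_det: "A \<in> GL n \<longleftrightarrow> A \<in> carrier_mat n n \<and> det A \<noteq> 0"
proof (cases "A \<in> carrier_mat n n")
  case A: True
  show ?thesis
  proof
    assume "A \<in> GL n"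
    then obtain B where AB: "A * B = 1\<^sub>m n" and BA: "B * A = 1\<^sub>m (dim_row B)"
      using A unfolding GL_def invertible_mat_def inverts_mat_def by auto
    have B: "B \<in> carrier_mat n n"
      using arg_cong[OF AB, of dim_col] arg_cong[OF BA, of dim_col] A by (auto intro: carrier_matI)
    have "det A * det B = 1"
      using det_mult[OF A B] AB by simp
    then show "A \<in> carrier_mat n n \<and> det A \<noteq> 0"
      using A by auto
  next
    assume "A \<in> carrier_mat n n \<and> det A \<noteq> 0"
    then have "inverts_mat A (mat_inv A) \<and> inverts_mat (mat_inv A) A"
      unfolding inverts_mat_def using mult_mat_inv[OF A] mat_inv_carrier[OF A] A by simp
    then show "A \<in> GL n"
      unfolding GL_def invertible_mat_def using A by auto
  qed
next
  case False
  then show ?thesis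
    unfolding GL_def by simp
qed

lemma GL_carrier: "A \<in> GL n \<Longrightarrow> A \<in> carrier_mat n n"
  unfolding GL_iff_det by simp

lemma GL_one: "1\<^sub>m n \<in> GL n"
  unfolding GL_iff_det by simp

lemma GL_mult: "A \<in> GL n \<Longrightarrow> B \<in> GL n \<Longrightarrow> A * B \<in> GL n"
  unfolding GL_iff_det using det_mult[of A n B] by auto

lemma GL_mult_mat_inv: "A \<in> GL n \<Longrightarrow> A * mat_inv A = 1\<^sub>m n"
  and GL_mat_inv_mult: "A \<in> GL n \<Longrightarrow> mat_inv A * A = 1\<^sub>m n"
  unfolding GL_iff_det using mult_mat_inv by auto

lemma GL_mat_inv:
  assumes A: "A \<in> GL n"
  shows "mat_inv A \<in> GL n"
proof -
  have A': "A \<in> carrier_mat n n" "mat_inv A \<in> carrier_mat n n"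
    using A GL_carrier mat_inv_carrier by auto
  have "det A * det (mat_inv A) = 1"
    using det_mult[OF A'] GL_mult_mat_inv[OF A] by simp
  then show ?thesis
    using A' by (auto simp: GL_iff_det)
qed

lemma GL_conj_eq:
  assumes "g \<in> GL n" and "Y \<in> carrier_mat n n" and "Y * g = g * X"
  shows "Y = g * X * mat_inv g"
proof -
  have g: "g \<in> carrier_mat n n" "mat_inv g \<in> carrier_mat n n"
    using assms(1) GL_carrier mat_inv_carrier by auto
  have "Y = Y * (g * mat_inv g)"
    using assms(2) GL_mult_mat_inv[OF assms(1)] by simp
  also have "\<dots> = (Y * g) * mat_inv g"
    using assms(2) g by simp
  finally show ?thesis
    using assms(3) by simp
qed

context
  fixes n m :: nat and \<rho> :: "'k::field mat \<Rightarrow> 'k mat"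
  assumes rr: "rational_rep n m \<rho>"
begin

lemma rep_GL: "g \<in> GL n \<Longrightarrow> \<rho> g \<in> GL m"
  using rr unfolding rational_rep_def by blast

lemma rep_carrier: "g \<in> GL n \<Longrightarrow> \<rho> g \<in> carrier_mat m m"
  using rep_GL GL_carrier by blast

lemma rep_one: "\<rho> (1\<^sub>m n) = 1\<^sub>m m"
  using rr unfolding rational_rep_def by blast

lemma rep_mult: "g \<in> GL n \<Longrightarrow> h \<in> GL n \<Longrightarrow> \<rho> (g * h) = \<rho> g * \<rho> h"
  using rr unfolding rational_rep_def by blast

lemma rep_mat_inv_mult: "g \<in> GL n \<Longrightarrow> \<rho> (mat_inv g) * \<rho> g = 1\<^sub>m m"
  and rep_mult_mat_inv: "g \<in> GL n \<Longrightarrow> \<rho> g * \<rho> (mat_inv g) = 1\<^sub>m m"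
  using rep_mult[of g "mat_inv g"] rep_mult[of "mat_inv g" g] rep_one
  by (simp_all add: GL_mat_inv GL_mat_inv_mult GL_mult_mat_inv)

end

lemma alg_closed_infinite:
  assumes "alg_closed TYPE('k::field)"
  shows "infinite (UNIV :: 'k set)"
proof
  assume fin: "finite (UNIV :: 'k set)"
  define p :: "'k poly" where "p = (\<Prod>a\<in>UNIV. [:-a, 1:]) + 1"
  have "degree (\<Prod>a\<in>(UNIV::'k set). [:-a, 1:]) = card (UNIV :: 'k set)"
    by (subst degree_prod_eq_sum_degree) auto
  then have "degree p > 0"
    using fin finite_UNIV_card_ge_0 unfolding p_def by (metis degree_add_eq_left degree_1)
  then obtain x where "poly p x = 0"
    using assms unfolding alg_closed_def by blast
  moreover have "poly (\<Prod>a\<in>(UNIV::'k set). [:-a, 1:]) x = 0"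
    unfolding poly_prod using fin by (intro prod_zero) auto
  ultimately show False
    unfolding p_def by simp
qed

section \<open>The differential of a rational representation\<close>

lemma poly_fun_sum:
  "finite S \<Longrightarrow> (\<And>i. i \<in> S \<Longrightarrow> f i \<in> poly_fun n) \<Longrightarrow> (\<lambda>A. \<Sum>i\<in>S. f i A) \<in> poly_fun n"
  by (induction S rule: finite_induct) (auto intro: poly_fun.intros)

lemma poly_fun_prod:
  "finite S \<Longrightarrow> (\<And>i. i \<in> S \<Longrightarrow> f i \<in> poly_fun n) \<Longrightarrow> (\<lambda>A. \<Prod>i\<in>S. f i A) \<in> poly_fun n"
  by (induction S rule: finite_induct) (auto intro: poly_fun.intros)

lemma det_poly_fun: "\<exists>p \<in> poly_fun n. \<forall>A \<in> carrier_mat n n. det A = p A"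
proof
  let ?p = "\<lambda>A. \<Sum>\<pi> \<in> {\<pi>. \<pi> permutes {0..<n}}. signof \<pi> * (\<Prod>i = 0..<n. A $$ (i, \<pi> i))"
  show "\<forall>A \<in> carrier_mat n n. det A = ?p A"
    by (auto simp: det_def)
  have "(\<lambda>A. \<Prod>i = 0..<n. A $$ (i, \<pi> i)) \<in> poly_fun n" if "\<pi> permutes {0..<n}" for \<pi>
    using permutes_in_image[OF that] by (intro poly_fun_prod poly_fun.coord) auto
  then show "?p \<in> poly_fun n"
    by (intro poly_fun_sum poly_fun.mult poly_fun.const) (auto simp: finite_permutations)
qed

lemma poly_fun_on_line:
  assumes "p \<in> poly_fun n" and X: "X \<in> carrier_mat n n"
  shows "\<exists>q. \<forall>t. p (1\<^sub>m n + t \<cdot>\<^sub>m X) = poly q t"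
  using assms(1)
proof (induction rule: poly_fun.induct)
  case (const c)
  show ?case
    by (rule exI[of _ "[:c:]"]) simp
next
  case (coord i j)
  then show ?case
    using X by (intro exI[of _ "[:of_bool (i = j), X $$ (i, j):]"]) auto
next
  case (add p q)
  then obtain a b where "\<forall>t. p (1\<^sub>m n + t \<cdot>\<^sub>m X) = poly a t" "\<forall>t. q (1\<^sub>m n + t \<cdot>\<^sub>m X) = poly b t"
    by blast
  then show ?case
    by (intro exI[of _ "a + b"]) simp
next
  case (mult p q)
  then obtain a b where "\<forall>t. p (1\<^sub>m n + t \<cdot>\<^sub>m X) = poly a t" "\<forall>t. q (1\<^sub>m n + t \<cdot>\<^sub>m X) = poly b t"
    by blast
  then show ?case
    by (intro exI[of _ "a * b"]) simp
qed

lemma det_on_line: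
  fixes X :: "'k::field mat"
  assumes X: "X \<in> carrier_mat n n"
  obtains \<delta> where "poly \<delta> 0 = 1" and "\<And>t. det (1\<^sub>m n + t \<cdot>\<^sub>m X) = poly \<delta> t"
proof -
  obtain p :: "'k mat \<Rightarrow> 'k" where "p \<in> poly_fun n" and p: "\<forall>A \<in> carrier_mat n n. det A = p A"
    using det_poly_fun by blast
  then obtain \<delta> where \<delta>: "\<And>t. p (1\<^sub>m n + t \<cdot>\<^sub>m X) = poly \<delta> t"
    using poly_fun_on_line[OF _ X] by blast
  have "det (1\<^sub>m n + t \<cdot>\<^sub>m X) = poly \<delta> t" for t
    using p \<delta> X by simp
  moreover have "1\<^sub>m n + 0 \<cdot>\<^sub>m X = 1\<^sub>m n"
    using X by (intro eq_matI) auto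
  ultimately show thesis
    using that by (metis det_one)
qed

lemma finite_not_GL_on_line:
  assumes X: "X \<in> carrier_mat n n"
  shows "finite {t. 1\<^sub>m n + t \<cdot>\<^sub>m X \<notin> GL n}"
proof -
  obtain \<delta> where \<delta>0: "poly \<delta> 0 = 1" and \<delta>: "\<And>t. det (1\<^sub>m n + t \<cdot>\<^sub>m X) = poly \<delta> t"
    using det_on_line[OF X] by blast
  have "{t. 1\<^sub>m n + t \<cdot>\<^sub>m X \<notin> GL n} \<subseteq> {t. poly \<delta> t = 0}"
    using X by (auto simp: GL_iff_det \<delta>)
  moreover have "\<delta> \<noteq> 0"
    using \<delta>0 by auto
  ultimately show ?thesis
    using poly_roots_finite finite_subset by blast
qed

definition rat_deriv0 :: "'k::field poly \<Rightarrow> 'k poly \<Rightarrow> 'k" where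
  "rat_deriv0 q r = (coeff q 1 * coeff r 0 - coeff q 0 * coeff r 1) / (coeff r 0)^2"

lemma rat_deriv0_cross_eq:
  fixes q r q' r' :: "'k::field poly"
  assumes qr: "q * r' = q' * r" and r: "coeff r 0 \<noteq> 0" "coeff r' 0 \<noteq> 0"
  shows "rat_deriv0 q r = rat_deriv0 q' r'"
proof -
  have e0: "coeff q 0 * coeff r' 0 = coeff q' 0 * coeff r 0"
    using arg_cong[OF qr, of "\<lambda>p. coeff p 0"] by (simp add: coeff_mult)
  have e1: "coeff q 0 * coeff r' 1 + coeff q 1 * coeff r' 0 = coeff q' 0 * coeff r 1 + coeff q' 1 * coeff r 0"
    using arg_cong[OF qr, of "\<lambda>p. coeff p 1"] by (simp add: coeff_mult)
  let ?q0 = "coeff q 0" and ?q1 = "coeff q 1" and ?r0 = "coeff r 0" and ?r1 = "coeff r 1"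
  let ?Q0 = "coeff q' 0" and ?Q1 = "coeff q' 1" and ?R0 = "coeff r' 0" and ?R1 = "coeff r' 1"
  \<comment> \<open>the cross-multiplied derivatives differ by a combination of \<open>e0\<close> and \<open>e1\<close>\<close>
  have "(?q1 * ?r0 - ?q0 * ?r1) * ?R0^2 - (?Q1 * ?R0 - ?Q0 * ?R1) * ?r0^2
      = ?r0 * ?R0 * (?q0 * ?R1 + ?q1 * ?R0 - ?Q0 * ?r1 - ?Q1 * ?r0)
        + (?r1 * ?R0 + ?r0 * ?R1) * (?Q0 * ?r0 - ?q0 * ?R0)"
    by (simp add: algebra_simps power2_eq_square)
  with e0 e1 r
  show ?thesis
    unfolding rat_deriv0_def by (simp add: frac_eq_eq)
qed

lemma rat_deriv0_smult [simp]: "rat_deriv0 (Polynomial.smult c q) r = c * rat_deriv0 q r"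
  unfolding rat_deriv0_def by (simp add: algebra_simps add_divide_distrib diff_divide_distrib)

lemma rat_deriv0_sum [simp]: "rat_deriv0 (\<Sum>i\<in>S. q i) r = (\<Sum>i\<in>S. rat_deriv0 (q i) r)"
  unfolding rat_deriv0_def
  by (simp add: coeff_sum sum_distrib_right sum_subtractf sum_divide_distrib[symmetric])

lemma rat_deriv0_unique:
  fixes q r q' r' :: "'k::field poly"
  assumes inf: "infinite (UNIV :: 'k set)" and U: "finite (- U)"
    and r: "poly r 0 \<noteq> 0" "poly r' 0 \<noteq> 0"
    and eq: "\<And>t. t \<in> U \<Longrightarrow> poly r t \<noteq> 0 \<Longrightarrow> poly r' t \<noteq> 0 \<Longrightarrow>
      poly q t / poly r t = poly q' t / poly r' t"
  shows "rat_deriv0 q r = rat_deriv0 q' r'"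
proof -
  define S where "S = U - {t. poly r t = 0} - {t. poly r' t = 0}"
  have "r \<noteq> 0" "r' \<noteq> 0"
    using r by auto
  then have "infinite S"
    unfolding S_def using inf U poly_roots_finite
    by (metis Diff_infinite_finite Compl_eq_Diff_UNIV finite_Diff2)
  moreover have "S \<subseteq> {t. poly (q * r' - q' * r) t = 0}"
    using eq by (auto simp: S_def field_simps)
  ultimately have "q * r' - q' * r = 0"
    using poly_roots_finite finite_subset by blast
  then show ?thesis
    using r by (intro rat_deriv0_cross_eq) (auto simp: poly_0_coeff_0)
qed

lemma GL_on_line_iff:
  "X \<in> carrier_mat n n \<Longrightarrow> 1\<^sub>m n + t \<cdot>\<^sub>m X \<in> GL n \<longleftrightarrow> invertible_mat (1\<^sub>m n + t \<cdot>\<^sub>m X)"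
  unfolding GL_def by simp

lemma d_rep_entry:
  fixes \<rho> :: "'k::field mat \<Rightarrow> 'k mat"
  assumes inf: "infinite (UNIV :: 'k set)" and X: "X \<in> carrier_mat n n" and ab: "a < m" "b < m"
    and r: "poly r 0 \<noteq> 0"
    and rep: "\<And>t. 1\<^sub>m n + t \<cdot>\<^sub>m X \<in> GL n \<Longrightarrow> poly r t \<noteq> 0 \<Longrightarrow>
      \<rho> (1\<^sub>m n + t \<cdot>\<^sub>m X) $$ (a, b) = poly q t / poly r t"
  shows "d_rep n m \<rho> X $$ (a, b) = rat_deriv0 q r"
proof -
  let ?P = "\<lambda>q r. poly r 0 \<noteq> 0 \<and> (\<forall>t. invertible_mat (1\<^sub>m n + t \<cdot>\<^sub>m X) \<and> poly r t \<noteq> 0 \<longrightarrow>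
      \<rho> (1\<^sub>m n + t \<cdot>\<^sub>m X) $$ (a, b) = poly q t / poly r t)"
  have "(THE D. \<exists>q r. ?P q r \<and> D = rat_deriv0 q r) = rat_deriv0 q r"
  proof (rule the_equality)
    show "\<exists>q' r'. ?P q' r' \<and> rat_deriv0 q r = rat_deriv0 q' r'"
      using r rep GL_on_line_iff[OF X] by blast
  next
    fix D assume "\<exists>q' r'. ?P q' r' \<and> D = rat_deriv0 q' r'"
    then obtain q' r' where r': "poly r' 0 \<noteq> 0" and D: "D = rat_deriv0 q' r'"
      and rep': "\<And>t. 1\<^sub>m n + t \<cdot>\<^sub>m X \<in> GL n \<Longrightarrow> poly r' t \<noteq> 0 \<Longrightarrow>
        \<rho> (1\<^sub>m n + t \<cdot>\<^sub>m X) $$ (a, b) = poly q' t / poly r' t"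
      using GL_on_line_iff[OF X] by blast
    have "rat_deriv0 q r = rat_deriv0 q' r'"
    proof (rule rat_deriv0_unique[OF inf _ r r'])
      show "finite (- {t. 1\<^sub>m n + t \<cdot>\<^sub>m X \<in> GL n})"
        using finite_not_GL_on_line[OF X] by (simp add: Compl_eq)
    qed (use rep rep' in fastforce)
    then show "D = rat_deriv0 q r"
      using D by simp
  qed
  then show ?thesis
    unfolding d_rep_def rat_deriv0_def using ab by simp
qed

lemma rational_rep_on_line:
  fixes \<rho> :: "'k::field mat \<Rightarrow> 'k mat"
  assumes rr: "rational_rep n m \<rho>" and X: "X \<in> carrier_mat n n"
  obtains r Q where "poly r 0 \<noteq> 0"
    and "\<And>a b t. a < m \<Longrightarrow> b < m \<Longrightarrow> 1\<^sub>m n + t \<cdot>\<^sub>m X \<in> GL n \<Longrightarrow>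
      \<rho> (1\<^sub>m n + t \<cdot>\<^sub>m X) $$ (a, b) = poly (Q a b) t / poly r t"
proof -
  obtain d where d: "\<forall>a < m. \<forall>b < m. \<exists>p \<in> poly_fun n. \<forall>g \<in> GL n. \<rho> g $$ (a, b) = p g / det g ^ d"
    using rr unfolding rational_rep_def by blast
  obtain \<delta> where \<delta>0: "poly \<delta> 0 = 1" and \<delta>: "\<And>t. det (1\<^sub>m n + t \<cdot>\<^sub>m X) = poly \<delta> t"
    using det_on_line[OF X] by blast
  have "\<exists>q. \<forall>t. 1\<^sub>m n + t \<cdot>\<^sub>m X \<in> GL n \<longrightarrow>
      \<rho> (1\<^sub>m n + t \<cdot>\<^sub>m X) $$ (a, b) = poly q t / poly (\<delta> ^ d) t" if ab: "a < m" "b < m" for a b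
  proof -
    obtain p where "p \<in> poly_fun n" and p: "\<forall>g \<in> GL n. \<rho> g $$ (a, b) = p g / det g ^ d"
      using d ab by blast
    then obtain q where "\<forall>t. p (1\<^sub>m n + t \<cdot>\<^sub>m X) = poly q t"
      using poly_fun_on_line[OF _ X] by blast
    then show ?thesis
      using p \<delta> by (auto simp: poly_power)
  qed
  then obtain Q where "\<And>a b t. a < m \<Longrightarrow> b < m \<Longrightarrow> 1\<^sub>m n + t \<cdot>\<^sub>m X \<in> GL n \<Longrightarrow>
      \<rho> (1\<^sub>m n + t \<cdot>\<^sub>m X) $$ (a, b) = poly (Q a b) t / poly (\<delta> ^ d) t"
    by metis
  moreover have "poly (\<delta> ^ d) 0 \<noteq> 0"
    using \<delta>0 by (simp add: poly_power)
  ultimately show thesis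
    using that by blast
qed

lemma index_mult_mat_triple:
  assumes "A \<in> carrier_mat k l" "M \<in> carrier_mat l l'" "B \<in> carrier_mat l' k'" "a < k" "b < k'"
  shows "(A * M * B) $$ (a, b) = (\<Sum>j = 0..<l'. \<Sum>i = 0..<l. A $$ (a, i) * M $$ (i, j) * B $$ (j, b))"
  using assms by (simp add: scalar_prod_def sum_distrib_left mult.assoc) (rule sum.swap)

lemma d_rep_carrier: "d_rep n m \<rho> X \<in> carrier_mat m m"
  unfolding d_rep_def by simp

lemma d_rep_entry_lincomb:
  fixes \<rho> :: "'k::field mat \<Rightarrow> 'k mat"
  assumes inf: "infinite (UNIV :: 'k set)" and X: "X \<in> carrier_mat n n" and ab: "a < m" "b < m"
    and r: "poly r 0 \<noteq> 0"
    and rep: "\<And>t. 1\<^sub>m n + t \<cdot>\<^sub>m X \<in> GL n \<Longrightarrow>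
      \<rho> (1\<^sub>m n + t \<cdot>\<^sub>m X) $$ (a, b) = (\<Sum>j\<in>J. \<Sum>i\<in>I. c i j * poly (q i j) t) / poly r t"
  shows "d_rep n m \<rho> X $$ (a, b) = (\<Sum>j\<in>J. \<Sum>i\<in>I. c i j * rat_deriv0 (q i j) r)"
  using d_rep_entry[OF inf X ab r, where q = "\<Sum>j\<in>J. \<Sum>i\<in>I. Polynomial.smult (c i j) (q i j)"] rep
  by (simp add: poly_sum)

lemma d_rep_transport:
  fixes \<rho> :: "'k::field mat \<Rightarrow> 'k mat"
  assumes inf: "infinite (UNIV :: 'k set)" and rr: "rational_rep n m \<rho>"
    and X: "X \<in> carrier_mat n n" and Z: "Z \<in> carrier_mat n n"
    and A: "A \<in> carrier_mat m m" and B: "B \<in> carrier_mat m m"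
    and line: "\<And>t. 1\<^sub>m n + t \<cdot>\<^sub>m Z \<in> GL n \<Longrightarrow>
      1\<^sub>m n + t \<cdot>\<^sub>m X \<in> GL n \<and> \<rho> (1\<^sub>m n + t \<cdot>\<^sub>m Z) = A * \<rho> (1\<^sub>m n + t \<cdot>\<^sub>m X) * B"
  shows "d_rep n m \<rho> Z = A * d_rep n m \<rho> X * B"
proof -
  obtain r Q where r: "poly r 0 \<noteq> 0"
    and Q: "\<And>a b t. a < m \<Longrightarrow> b < m \<Longrightarrow> 1\<^sub>m n + t \<cdot>\<^sub>m X \<in> GL n \<Longrightarrow>
      \<rho> (1\<^sub>m n + t \<cdot>\<^sub>m X) $$ (a, b) = poly (Q a b) t / poly r t"
    using rational_rep_on_line[OF rr X] by blast
  have dX: "d_rep n m \<rho> X $$ (i, j) = rat_deriv0 (Q i j) r" if "i < m" "j < m" for i j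
    using d_rep_entry[OF inf X that r] Q that by blast
  \<comment> \<open>over the common denominator r, the entries of \<open>\<rho>(1 + tZ)\<close> are fixed linear combinations
    of the numerators of \<open>\<rho>(1 + tX)\<close>, and \<open>rat_deriv0\<close> is linear in the numerator\<close>
  have dZ: "d_rep n m \<rho> Z $$ (a, b)
      = (\<Sum>j = 0..<m. \<Sum>i = 0..<m. A $$ (a, i) * B $$ (j, b) * rat_deriv0 (Q i j) r)"
    if ab: "a < m" "b < m" for a b
  proof (rule d_rep_entry_lincomb[OF inf Z ab r])
    fix t assume "1\<^sub>m n + t \<cdot>\<^sub>m Z \<in> GL n"
    then have tX: "1\<^sub>m n + t \<cdot>\<^sub>m X \<in> GL n"
      and eq: "\<rho> (1\<^sub>m n + t \<cdot>\<^sub>m Z) = A * \<rho> (1\<^sub>m n + t \<cdot>\<^sub>m X) * B"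
      using line by auto
    show "\<rho> (1\<^sub>m n + t \<cdot>\<^sub>m Z) $$ (a, b)
        = (\<Sum>j = 0..<m. \<Sum>i = 0..<m. A $$ (a, i) * B $$ (j, b) * poly (Q i j) t) / poly r t"
      unfolding eq index_mult_mat_triple[OF A rep_carrier[OF rr tX] B ab] using Q[OF _ _ tX]
      by (simp add: sum_divide_distrib mult_ac)
  qed
  show ?thesis
  proof (rule eq_matI)
    fix a b assume "a < dim_row (A * d_rep n m \<rho> X * B)" "b < dim_col (A * d_rep n m \<rho> X * B)"
    then have ab: "a < m" "b < m"
      using A B by auto
    then show "d_rep n m \<rho> Z $$ (a, b) = (A * d_rep n m \<rho> X * B) $$ (a, b)"
      unfolding dZ[OF ab] index_mult_mat_triple[OF A d_rep_carrier B ab] by (simp add: dX mult_ac)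
  qed (use A B in \<open>simp_all add: d_rep_def\<close>)
qed

lemma conj_on_line:
  assumes g: "g \<in> GL n" and X: "X \<in> carrier_mat n n"
  shows "g * (1\<^sub>m n + t \<cdot>\<^sub>m X) * mat_inv g = 1\<^sub>m n + t \<cdot>\<^sub>m (g * X * mat_inv g)"
proof -
  have gc: "g \<in> carrier_mat n n" and gi: "mat_inv g \<in> carrier_mat n n"
    using g GL_carrier mat_inv_carrier by auto
  have "g * (1\<^sub>m n + t \<cdot>\<^sub>m X) = g + t \<cdot>\<^sub>m (g * X)"
    using mult_add_distrib_mat[OF gc one_carrier_mat smult_carrier_mat[OF X]] mult_smult_distrib[OF gc X] gc
    by simp
  then have "g * (1\<^sub>m n + t \<cdot>\<^sub>m X) * mat_inv g = g * mat_inv g + (t \<cdot>\<^sub>m (g * X)) * mat_inv g"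
    using add_mult_distrib_mat[OF gc _ gi] gc X by simp
  also have "\<dots> = g * mat_inv g + t \<cdot>\<^sub>m (g * X * mat_inv g)"
    using mult_smult_assoc_mat[OF mult_carrier_mat[OF gc X] gi] by simp
  finally show ?thesis
    using GL_mult_mat_inv[OF g] by simp
qed

lemma d_rep_intertwines:
  fixes \<rho> :: "'k::field mat \<Rightarrow> 'k mat"
  assumes inf: "infinite (UNIV :: 'k set)" and rr: "rational_rep n m \<rho>"
    and g: "g \<in> GL n" and X: "X \<in> carrier_mat n n" and Y: "Y \<in> carrier_mat n n"
    and YX: "Y * g = g * X"
  shows "d_rep n m \<rho> Y * \<rho> g = \<rho> g * d_rep n m \<rho> X"
proof -
  have gc: "g \<in> carrier_mat n n" and gi: "mat_inv g \<in> GL n"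
    using g GL_carrier GL_mat_inv by auto
  have line: "1\<^sub>m n + t \<cdot>\<^sub>m Y = g * (1\<^sub>m n + t \<cdot>\<^sub>m X) * mat_inv g" for t
    using conj_on_line[OF g X] GL_conj_eq[OF g Y YX] by simp
  have "1\<^sub>m n + t \<cdot>\<^sub>m X \<in> GL n" if "1\<^sub>m n + t \<cdot>\<^sub>m Y \<in> GL n" for t
  proof -
    have M: "1\<^sub>m n + t \<cdot>\<^sub>m X \<in> carrier_mat n n"
      using X by simp
    have "det (1\<^sub>m n + t \<cdot>\<^sub>m Y) = det g * det (1\<^sub>m n + t \<cdot>\<^sub>m X) * det (mat_inv g)"
      unfolding line using det_mult[OF mult_carrier_mat[OF gc M] GL_carrier[OF gi]] det_mult[OF gc M]
      by simp
    then show ?thesis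
      using that M by (auto simp: GL_iff_det)
  qed
  with line have "d_rep n m \<rho> Y = \<rho> g * d_rep n m \<rho> X * \<rho> (mat_inv g)"
    by (intro d_rep_transport[OF inf rr X Y rep_carrier[OF rr g] rep_carrier[OF rr gi]])
      (simp add: rep_mult[OF rr] g gi GL_mult)
  then have "d_rep n m \<rho> Y * \<rho> g = \<rho> g * d_rep n m \<rho> X * (\<rho> (mat_inv g) * \<rho> g)"
    using assoc_mult_mat[OF mult_carrier_mat[OF rep_carrier[OF rr g] d_rep_carrier]
        rep_carrier[OF rr gi] rep_carrier[OF rr g]]
    by simp
  then show ?thesis
    using rep_mat_inv_mult[OF rr g] right_mult_one_mat[OF mult_carrier_mat[OF rep_carrier[OF rr g] d_rep_carrier]]
    by simp
qed

section \<open>Orbits of the semidirect product\<close>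

lemma mult_mat_vec_uminus:
  "A \<in> carrier_mat k l \<Longrightarrow> (v :: 'k::field vec) \<in> carrier_vec l \<Longrightarrow> A *\<^sub>v (- v) = - (A *\<^sub>v v)"
  by (intro eq_vecI) auto

context
  fixes n m :: nat and \<rho> :: "'k::field mat \<Rightarrow> 'k mat"
  assumes inf: "infinite (UNIV :: 'k set)" and rr: "rational_rep n m \<rho>"
begin

lemma semidirect_orbit_iff:
  "(Y, w') \<in> semidirect_orbit n m \<rho> (X, w) \<longleftrightarrow>
    (\<exists>g v. g \<in> GL n \<and> v \<in> carrier_vec m \<and> Y \<in> carrier_mat n n \<and> Y * g = g * X \<and>
       w' = \<rho> g *\<^sub>v w + d_rep n m \<rho> Y *\<^sub>v v)"
proof -
  have flip: "- (d_rep n m \<rho> Y *\<^sub>v v) + \<rho> g *\<^sub>v w = \<rho> g *\<^sub>v w + d_rep n m \<rho> Y *\<^sub>v (- v)"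
    if "g \<in> GL n" "v \<in> carrier_vec m" for g v
    using that rep_carrier[OF rr that(1)] d_rep_carrier[of n m \<rho> Y]
    by (intro eq_vecI) (auto simp: mult_mat_vec_uminus)
  show ?thesis
  proof
    assume "(Y, w') \<in> semidirect_orbit n m \<rho> (X, w)"
    then obtain g v where "g \<in> GL n" "v \<in> carrier_vec m" "Y \<in> carrier_mat n n" "Y * g = g * X"
      and "w' = - (d_rep n m \<rho> Y *\<^sub>v v) + \<rho> g *\<^sub>v w"
      unfolding semidirect_orbit_def by auto
    then show "\<exists>g v. g \<in> GL n \<and> v \<in> carrier_vec m \<and> Y \<in> carrier_mat n n \<and> Y * g = g * X \<and>
       w' = \<rho> g *\<^sub>v w + d_rep n m \<rho> Y *\<^sub>v v"
      using flip by (intro exI[of _ g] exI[of _ "- v"]) auto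
  next
    assume "\<exists>g v. g \<in> GL n \<and> v \<in> carrier_vec m \<and> Y \<in> carrier_mat n n \<and> Y * g = g * X \<and>
       w' = \<rho> g *\<^sub>v w + d_rep n m \<rho> Y *\<^sub>v v"
    then obtain g v where g: "g \<in> GL n" and v: "v \<in> carrier_vec m" and "Y \<in> carrier_mat n n"
      and "Y * g = g * X" and w': "w' = \<rho> g *\<^sub>v w + d_rep n m \<rho> Y *\<^sub>v v"
      by blast
    moreover have "- v \<in> carrier_vec m" and "w' = - (d_rep n m \<rho> Y *\<^sub>v (- v)) + \<rho> g *\<^sub>v w"
      using flip[OF g, of "- v"] v w' by auto
    ultimately show "(Y, w') \<in> semidirect_orbit n m \<rho> (X, w)"
      unfolding semidirect_orbit_def fst_conv snd_conv by blast
  qed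
qed

lemma semidirect_orbit_carrier:
  assumes "(Y, w') \<in> semidirect_orbit n m \<rho> (X, w)"
  shows "Y \<in> carrier_mat n n" and "w' \<in> carrier_vec m"
proof -
  obtain g v where "g \<in> GL n" "Y \<in> carrier_mat n n" "w' = \<rho> g *\<^sub>v w + d_rep n m \<rho> Y *\<^sub>v v"
    using assms unfolding semidirect_orbit_iff by blast
  then show "Y \<in> carrier_mat n n" and "w' \<in> carrier_vec m"
    using rep_carrier[OF rr] d_rep_carrier[of n m \<rho> Y] by (auto intro: carrier_vecI)
qed

lemma semidirect_orbit_translate:
  assumes "X \<in> carrier_mat n n" and "w \<in> carrier_vec m" and "v \<in> carrier_vec m"
  shows "(X, w + d_rep n m \<rho> X *\<^sub>v v) \<in> semidirect_orbit n m \<rho> (X, w)"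
  unfolding semidirect_orbit_iff using assms GL_one
  by (intro exI[of _ "1\<^sub>m n"] exI[of _ v]) (simp add: rep_one[OF rr])

lemma semidirect_orbit_conj:
  assumes g: "g \<in> GL n" and Y: "Y \<in> carrier_mat n n" and Yg: "Y * g = g * X"
  shows "(Y, \<rho> g *\<^sub>v w) \<in> semidirect_orbit n m \<rho> (X, w)"
proof -
  have "\<rho> g *\<^sub>v w = \<rho> g *\<^sub>v w + d_rep n m \<rho> Y *\<^sub>v 0\<^sub>v m"
    using rep_carrier[OF rr g] d_rep_carrier[of n m \<rho> Y] by (intro eq_vecI) auto
  then show ?thesis
    unfolding semidirect_orbit_iff using g Y Yg zero_carrier_vec by blast
qed

lemma semidirect_orbit_refl:
  assumes "X \<in> carrier_mat n n" and "w \<in> carrier_vec m"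
  shows "(X, w) \<in> semidirect_orbit n m \<rho> (X, w)"
proof -
  have "X * 1\<^sub>m n = 1\<^sub>m n * X"
    using assms(1) by simp
  from semidirect_orbit_conj[OF GL_one assms(1) this, of w] show ?thesis
    using rep_one[OF rr] one_mult_mat_vec[OF assms(2)] by simp
qed

lemma semidirect_orbit_trans:
  assumes YX: "(Y, w') \<in> semidirect_orbit n m \<rho> (X, w)"
    and ZY: "(Z, w'') \<in> semidirect_orbit n m \<rho> (Y, w')"
    and X: "X \<in> carrier_mat n n" and w: "w \<in> carrier_vec m"
  shows "(Z, w'') \<in> semidirect_orbit n m \<rho> (X, w)"
proof -
  obtain g v where g: "g \<in> GL n" and v: "v \<in> carrier_vec m" and Y: "Y \<in> carrier_mat n n"
    and Yg: "Y * g = g * X" and w': "w' = \<rho> g *\<^sub>v w + d_rep n m \<rho> Y *\<^sub>v v"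
    using YX unfolding semidirect_orbit_iff by blast
  obtain h u where h: "h \<in> GL n" and u: "u \<in> carrier_vec m" and Z: "Z \<in> carrier_mat n n"
    and Zh: "Z * h = h * Y" and w'': "w'' = \<rho> h *\<^sub>v w' + d_rep n m \<rho> Z *\<^sub>v u"
    using ZY unfolding semidirect_orbit_iff by blast
  have gc: "g \<in> carrier_mat n n" and hc: "h \<in> carrier_mat n n"
    using g h GL_carrier by auto
  have rg: "\<rho> g \<in> carrier_mat m m" and rh: "\<rho> h \<in> carrier_mat m m"
    using g h rep_carrier[OF rr] by auto
  have DY: "d_rep n m \<rho> Y \<in> carrier_mat m m" and DZ: "d_rep n m \<rho> Z \<in> carrier_mat m m"
    by (rule d_rep_carrier)+
  have "Z * (h * g) = (Z * h) * g"
    using Z hc gc by simp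
  also have "\<dots> = h * (Y * g)"
    unfolding Zh using hc Y gc by simp
  also have "\<dots> = (h * g) * X"
    unfolding Yg using hc gc X by simp
  finally have Zhg: "Z * (h * g) = (h * g) * X" .
  have "\<rho> h *\<^sub>v (d_rep n m \<rho> Y *\<^sub>v v) = d_rep n m \<rho> Z *\<^sub>v (\<rho> h *\<^sub>v v)"
    using assoc_mult_mat_vec[OF rh DY v] assoc_mult_mat_vec[OF DZ rh v]
      d_rep_intertwines[OF inf rr h Y Z Zh] by simp
  moreover have "\<rho> h *\<^sub>v (\<rho> g *\<^sub>v w) = \<rho> (h * g) *\<^sub>v w"
    using assoc_mult_mat_vec[OF rh rg w] rep_mult[OF rr h g] by simp
  ultimately have "w'' = \<rho> (h * g) *\<^sub>v w + d_rep n m \<rho> Z *\<^sub>v (\<rho> h *\<^sub>v v + u)"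
    unfolding w'' w' using rh rg DY DZ w v u rep_carrier[OF rr GL_mult[OF h g]]
    by (simp add: mult_add_distrib_mat_vec[OF rh] mult_add_distrib_mat_vec[OF DZ])
      (rule assoc_add_vec; blast intro: mult_mat_vec_carrier)
  then show ?thesis
    unfolding semidirect_orbit_iff using GL_mult[OF h g] Z Zhg rh v u
    by (intro exI[of _ "h * g"] exI[of _ "\<rho> h *\<^sub>v v + u"]) auto
qed

lemma semidirect_orbit_sym:
  assumes YX: "(Y, w') \<in> semidirect_orbit n m \<rho> (X, w)"
    and X: "X \<in> carrier_mat n n" and w: "w \<in> carrier_vec m"
  shows "(X, w) \<in> semidirect_orbit n m \<rho> (Y, w')"
proof -
  obtain g v where g: "g \<in> GL n" and v: "v \<in> carrier_vec m" and Y: "Y \<in> carrier_mat n n"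
    and Yg: "Y * g = g * X" and w': "w' = \<rho> g *\<^sub>v w + d_rep n m \<rho> Y *\<^sub>v v"
    using YX unfolding semidirect_orbit_iff by blast
  define g' where "g' = mat_inv g"
  have g': "g' \<in> GL n" and g'c: "g' \<in> carrier_mat n n" and gc: "g \<in> carrier_mat n n"
    unfolding g'_def using g GL_mat_inv GL_carrier by auto
  have rg: "\<rho> g \<in> carrier_mat m m" and rg': "\<rho> g' \<in> carrier_mat m m"
    using g g' rep_carrier[OF rr] by auto
  have DX: "d_rep n m \<rho> X \<in> carrier_mat m m" and DY: "d_rep n m \<rho> Y \<in> carrier_mat m m"
    by (rule d_rep_carrier)+
  have "g' * Y = g' * (g * X * g')"
    using GL_conj_eq[OF g Y Yg] unfolding g'_def by simp
  also have "\<dots> = (g' * g) * X * g'"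
    using g'c gc X by (simp add: assoc_mult_mat[of _ n n _ n _ n])
  also have "\<dots> = X * g'"
    unfolding g'_def GL_mat_inv_mult[OF g] using X by simp
  finally have Xg': "X * g' = g' * Y" by simp
  have "\<rho> g' *\<^sub>v (d_rep n m \<rho> Y *\<^sub>v v) = d_rep n m \<rho> X *\<^sub>v (\<rho> g' *\<^sub>v v)"
    using assoc_mult_mat_vec[OF rg' DY v] assoc_mult_mat_vec[OF DX rg' v]
      d_rep_intertwines[OF inf rr g' Y X Xg'] by simp
  moreover have "\<rho> g' *\<^sub>v (\<rho> g *\<^sub>v w) = w"
    using assoc_mult_mat_vec[OF rg' rg w] rep_mat_inv_mult[OF rr g] w unfolding g'_def by simp
  ultimately have "w = \<rho> g' *\<^sub>v w' + d_rep n m \<rho> X *\<^sub>v (- (\<rho> g' *\<^sub>v v))"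
    unfolding w' using rg rg' DX DY w v
    by (intro eq_vecI) (auto simp: mult_add_distrib_mat_vec[OF rg'] mult_mat_vec_uminus)
  then show ?thesis
    unfolding semidirect_orbit_iff using g' X Xg' rg' v
    by (intro exI[of _ g'] exI[of _ "- (\<rho> g' *\<^sub>v v)"]) auto
qed

lemma semidirect_orbit_eq:
  assumes YX: "(Y, w') \<in> semidirect_orbit n m \<rho> (X, w)"
    and X: "X \<in> carrier_mat n n" and w: "w \<in> carrier_vec m"
  shows "semidirect_orbit n m \<rho> (Y, w') = semidirect_orbit n m \<rho> (X, w)"
proof -
  have Y: "Y \<in> carrier_mat n n" and w': "w' \<in> carrier_vec m"
    using semidirect_orbit_carrier[OF YX] by auto
  show ?thesis
    using semidirect_orbit_trans[OF YX _ X w]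
      semidirect_orbit_trans[OF semidirect_orbit_sym[OF YX X w] _ Y w']
    by auto
qed

end

section \<open>Orbits on the quotient by JM\<close>

definition JM_coset :: "nat \<Rightarrow> nat \<Rightarrow> ('k::field mat \<Rightarrow> 'k mat) \<Rightarrow> 'k mat \<Rightarrow> 'k vec \<Rightarrow> 'k vec set" where
  "JM_coset n m \<rho> J w = (\<lambda>u. w + u) ` JM n m \<rho> J"

definition centralizer_orbit ::
  "nat \<Rightarrow> ('k::field mat \<Rightarrow> 'k mat) \<Rightarrow> 'k mat \<Rightarrow> 'k vec set \<Rightarrow> 'k vec set set" where
  "centralizer_orbit n \<rho> J C = (\<lambda>g. (\<lambda>x. \<rho> g *\<^sub>v x) ` C) ` centralizer n J"

lemma mem_JM_coset_iff:
  "x \<in> JM_coset n m \<rho> J w \<longleftrightarrow> (\<exists>v \<in> carrier_vec m. x = w + d_rep n m \<rho> J *\<^sub>v v)"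
  unfolding JM_coset_def JM_def by auto

lemma quot_orbits_eq:
  "quot_orbits n m \<rho> J = (\<lambda>w. centralizer_orbit n \<rho> J (JM_coset n m \<rho> J w)) ` carrier_vec m"
  unfolding quot_orbits_def Let_def centralizer_orbit_def JM_coset_def by (simp add: image_image)

lemma centralizer_GL: "h \<in> centralizer n J \<Longrightarrow> h \<in> GL n"
  unfolding centralizer_def by simp

lemma centralizer_one: "J \<in> carrier_mat n n \<Longrightarrow> 1\<^sub>m n \<in> centralizer n J"
  unfolding centralizer_def using GL_one by simp

lemma centralizer_mult:
  assumes J: "J \<in> carrier_mat n n" and h: "h \<in> centralizer n J" and g: "g \<in> centralizer n J"
  shows "h * g \<in> centralizer n J"
proof -
  have hc: "h \<in> carrier_mat n n" and gc: "g \<in> carrier_mat n n"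
    using GL_carrier[OF centralizer_GL[OF h]] GL_carrier[OF centralizer_GL[OF g]] by auto
  have hJ: "h * J = J * h" and gJ: "g * J = J * g"
    using h g unfolding centralizer_def by auto
  have "h * g * J = h * (g * J)"
    using hc gc J by simp
  also have "\<dots> = (h * J) * g"
    unfolding gJ using hc gc J by simp
  also have "\<dots> = J * (h * g)"
    unfolding hJ using hc gc J by simp
  finally have "h * g * J = J * (h * g)" .
  with GL_mult[OF centralizer_GL[OF h] centralizer_GL[OF g]] show ?thesis
    unfolding centralizer_def by simp
qed

context
  fixes n m :: nat and \<rho> :: "'k::field mat \<Rightarrow> 'k mat" and J :: "'k mat"
  assumes inf: "infinite (UNIV :: 'k set)" and rr: "rational_rep n m \<rho>" and J: "J \<in> carrier_mat n n"
begin

lemma JM_coset_eq_iff: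
  assumes w: "w \<in> carrier_vec m" and w': "w' \<in> carrier_vec m"
  shows "JM_coset n m \<rho> J w' = JM_coset n m \<rho> J w \<longleftrightarrow>
    (\<exists>v \<in> carrier_vec m. w' = w + d_rep n m \<rho> J *\<^sub>v v)"
proof
  let ?D = "d_rep n m \<rho> J"
  assume eq: "JM_coset n m \<rho> J w' = JM_coset n m \<rho> J w"
  have "w' = w' + ?D *\<^sub>v 0\<^sub>v m"
    using w' d_rep_carrier[of n m \<rho> J] by (intro eq_vecI) auto
  then have "w' \<in> JM_coset n m \<rho> J w'"
    unfolding mem_JM_coset_iff by (intro bexI[of _ "0\<^sub>v m"]) auto
  then show "\<exists>v \<in> carrier_vec m. w' = w + ?D *\<^sub>v v"
    unfolding eq mem_JM_coset_iff .
next
  let ?D = "d_rep n m \<rho> J"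
  have D: "?D \<in> carrier_mat m m"
    by (rule d_rep_carrier)
  assume "\<exists>v \<in> carrier_vec m. w' = w + ?D *\<^sub>v v"
  then obtain v where v: "v \<in> carrier_vec m" and w'v: "w' = w + ?D *\<^sub>v v"
    by blast
  have "w' + ?D *\<^sub>v u = w + ?D *\<^sub>v (v + u)" if "u \<in> carrier_vec m" for u
    using w v that D unfolding w'v by (simp add: mult_add_distrib_mat_vec)
  moreover have "w + ?D *\<^sub>v u = w' + ?D *\<^sub>v (u - v)" if "u \<in> carrier_vec m" for u
    using w v that D unfolding w'v by (simp add: mult_minus_distrib_mat_vec) (intro eq_vecI; simp)
  ultimately show "JM_coset n m \<rho> J w' = JM_coset n m \<rho> J w"
    unfolding set_eq_iff mem_JM_coset_iff using v by (metis add_carrier_vec minus_carrier_vec)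
qed

lemma image_JM_coset:
  assumes h: "h \<in> centralizer n J" and w: "w \<in> carrier_vec m"
  shows "(\<lambda>x. \<rho> h *\<^sub>v x) ` JM_coset n m \<rho> J w = JM_coset n m \<rho> J (\<rho> h *\<^sub>v w)"
proof -
  let ?D = "d_rep n m \<rho> J"
  have hG: "h \<in> GL n" and h': "mat_inv h \<in> GL n"
    using centralizer_GL[OF h] GL_mat_inv by auto
  have rh: "\<rho> h \<in> carrier_mat m m" and rh': "\<rho> (mat_inv h) \<in> carrier_mat m m"
    using rep_carrier[OF rr] hG h' by auto
  have D: "?D \<in> carrier_mat m m"
    by (rule d_rep_carrier)
  have "J * h = h * J"
    using h unfolding centralizer_def by simp
  then have comm: "\<rho> h *\<^sub>v (?D *\<^sub>v v) = ?D *\<^sub>v (\<rho> h *\<^sub>v v)" if "v \<in> carrier_vec m" for v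
    using d_rep_intertwines[OF inf rr hG J J] assoc_mult_mat_vec[OF rh D that]
      assoc_mult_mat_vec[OF D rh that] by simp
  have shift: "\<rho> h *\<^sub>v (w + ?D *\<^sub>v v) = \<rho> h *\<^sub>v w + ?D *\<^sub>v (\<rho> h *\<^sub>v v)" if "v \<in> carrier_vec m" for v
    using that w D comm by (simp add: mult_add_distrib_mat_vec[OF rh])
  show ?thesis
  proof (intro equalityI subsetI)
    fix y assume "y \<in> (\<lambda>x. \<rho> h *\<^sub>v x) ` JM_coset n m \<rho> J w"
    then obtain x where "x \<in> JM_coset n m \<rho> J w" and y: "y = \<rho> h *\<^sub>v x"
      by blast
    then obtain v where v: "v \<in> carrier_vec m" and y: "y = \<rho> h *\<^sub>v (w + ?D *\<^sub>v v)"
      unfolding mem_JM_coset_iff by blast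
    show "y \<in> JM_coset n m \<rho> J (\<rho> h *\<^sub>v w)"
      unfolding mem_JM_coset_iff y shift[OF v] using rh v by (intro bexI[of _ "\<rho> h *\<^sub>v v"]) auto
  next
    fix y assume "y \<in> JM_coset n m \<rho> J (\<rho> h *\<^sub>v w)"
    then obtain v where v: "v \<in> carrier_vec m" and y: "y = \<rho> h *\<^sub>v w + ?D *\<^sub>v v"
      unfolding mem_JM_coset_iff by blast
    define v' where "v' = \<rho> (mat_inv h) *\<^sub>v v"
    have v': "v' \<in> carrier_vec m" and "\<rho> h *\<^sub>v v' = v"
      unfolding v'_def using assoc_mult_mat_vec[OF rh rh' v] rep_mult_mat_inv[OF rr hG] rh' v by auto
    then have "y = \<rho> h *\<^sub>v (w + ?D *\<^sub>v v')"
      unfolding y shift[OF v'] by simp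
    moreover have "w + ?D *\<^sub>v v' \<in> JM_coset n m \<rho> J w"
      unfolding mem_JM_coset_iff using v' by blast
    ultimately show "y \<in> (\<lambda>x. \<rho> h *\<^sub>v x) ` JM_coset n m \<rho> J w"
      by blast
  qed
qed

lemma centralizer_orbit_JM_coset:
  "w \<in> carrier_vec m \<Longrightarrow>
    centralizer_orbit n \<rho> J (JM_coset n m \<rho> J w) = (\<lambda>h. JM_coset n m \<rho> J (\<rho> h *\<^sub>v w)) ` centralizer n J"
  unfolding centralizer_orbit_def using image_JM_coset by (intro image_cong) auto

lemma semidirect_orbit_centralizer_iff:
  assumes w: "w \<in> carrier_vec m" and w': "w' \<in> carrier_vec m"
  shows "(J, w') \<in> semidirect_orbit n m \<rho> (J, w) \<longleftrightarrow>
    (\<exists>h \<in> centralizer n J. JM_coset n m \<rho> J w' = JM_coset n m \<rho> J (\<rho> h *\<^sub>v w))"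
proof -
  have rhw: "\<rho> h *\<^sub>v w \<in> carrier_vec m" if "h \<in> centralizer n J" for h
    using rep_carrier[OF rr centralizer_GL[OF that]] w by simp
  have "(J, w') \<in> semidirect_orbit n m \<rho> (J, w) \<longleftrightarrow>
      (\<exists>h \<in> centralizer n J. \<exists>v \<in> carrier_vec m. w' = \<rho> h *\<^sub>v w + d_rep n m \<rho> J *\<^sub>v v)"
    unfolding semidirect_orbit_iff[OF inf rr] centralizer_def using J by (auto simp: eq_commute)
  also have "\<dots> \<longleftrightarrow> (\<exists>h \<in> centralizer n J. JM_coset n m \<rho> J w' = JM_coset n m \<rho> J (\<rho> h *\<^sub>v w))"
    using JM_coset_eq_iff[OF rhw w'] by simp
  finally show ?thesis .
qed

lemma centralizer_orbit_subset:
  assumes w: "w \<in> carrier_vec m" and w': "w' \<in> carrier_vec m"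
    and orb: "(J, w') \<in> semidirect_orbit n m \<rho> (J, w)"
  shows "centralizer_orbit n \<rho> J (JM_coset n m \<rho> J w') \<subseteq> centralizer_orbit n \<rho> J (JM_coset n m \<rho> J w)"
proof
  fix C assume "C \<in> centralizer_orbit n \<rho> J (JM_coset n m \<rho> J w')"
  then obtain h where h: "h \<in> centralizer n J" and C: "C = JM_coset n m \<rho> J (\<rho> h *\<^sub>v w')"
    unfolding centralizer_orbit_JM_coset[OF w'] by blast
  obtain g where g: "g \<in> centralizer n J" and gw: "JM_coset n m \<rho> J w' = JM_coset n m \<rho> J (\<rho> g *\<^sub>v w)"
    using orb semidirect_orbit_centralizer_iff[OF w w'] by blast
  have hG: "h \<in> GL n" and gG: "g \<in> GL n"
    using h g centralizer_GL by auto
  have "C = (\<lambda>x. \<rho> h *\<^sub>v x) ` JM_coset n m \<rho> J (\<rho> g *\<^sub>v w)"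
    unfolding C image_JM_coset[OF h w', symmetric] gw ..
  also have "\<dots> = JM_coset n m \<rho> J (\<rho> h *\<^sub>v (\<rho> g *\<^sub>v w))"
    using image_JM_coset[OF h] rep_carrier[OF rr gG] w by simp
  also have "\<rho> h *\<^sub>v (\<rho> g *\<^sub>v w) = \<rho> (h * g) *\<^sub>v w"
    using rep_mult[OF rr hG gG] rep_carrier[OF rr hG] rep_carrier[OF rr gG] w by simp
  finally show "C \<in> centralizer_orbit n \<rho> J (JM_coset n m \<rho> J w)"
    unfolding centralizer_orbit_JM_coset[OF w] using centralizer_mult[OF J h g] by blast
qed

lemma centralizer_orbit_eq_iff:
  assumes w: "w \<in> carrier_vec m" and w': "w' \<in> carrier_vec m"
  shows "centralizer_orbit n \<rho> J (JM_coset n m \<rho> J w) = centralizer_orbit n \<rho> J (JM_coset n m \<rho> J w')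
    \<longleftrightarrow> semidirect_orbit n m \<rho> (J, w) = semidirect_orbit n m \<rho> (J, w')"
proof
  assume eq: "centralizer_orbit n \<rho> J (JM_coset n m \<rho> J w) = centralizer_orbit n \<rho> J (JM_coset n m \<rho> J w')"
  have "JM_coset n m \<rho> J w' \<in> centralizer_orbit n \<rho> J (JM_coset n m \<rho> J w')"
    unfolding centralizer_orbit_JM_coset[OF w'] using centralizer_one[OF J] rep_one[OF rr] w' by force
  then have "(J, w') \<in> semidirect_orbit n m \<rho> (J, w)"
    unfolding semidirect_orbit_centralizer_iff[OF w w'] eq[symmetric] centralizer_orbit_JM_coset[OF w]
    by blast
  then show "semidirect_orbit n m \<rho> (J, w) = semidirect_orbit n m \<rho> (J, w')"
    using semidirect_orbit_eq[OF inf rr _ J w] by simp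
next
  assume eq: "semidirect_orbit n m \<rho> (J, w) = semidirect_orbit n m \<rho> (J, w')"
  then have "(J, w') \<in> semidirect_orbit n m \<rho> (J, w)" and "(J, w) \<in> semidirect_orbit n m \<rho> (J, w')"
    using semidirect_orbit_refl[OF inf rr J] w w' by auto
  then show "centralizer_orbit n \<rho> J (JM_coset n m \<rho> J w) = centralizer_orbit n \<rho> J (JM_coset n m \<rho> J w')"
    using centralizer_orbit_subset w w' by blast
qed

end

lemma finite_image_iff_eq_fibres:
  assumes "\<And>x y. x \<in> A \<Longrightarrow> y \<in> A \<Longrightarrow> f x = f y \<longleftrightarrow> g x = g y"
  shows "finite (f ` A) \<longleftrightarrow> finite (g ` A)"
proof -
  have "g ` A = (\<lambda>z. g (inv_into A f z)) ` f ` A"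
    unfolding image_image using assms by (intro image_cong refl) (metis f_inv_into_f imageI inv_into_into)
  moreover have "f ` A = (\<lambda>z. f (inv_into A g z)) ` g ` A"
    unfolding image_image using assms by (intro image_cong refl) (metis f_inv_into_f imageI inv_into_into)
  ultimately show ?thesis
    by (metis finite_imageI)
qed

lemma finite_quot_orbits_iff:
  fixes \<rho> :: "'k::field mat \<Rightarrow> 'k mat"
  assumes inf: "infinite (UNIV :: 'k set)" and rr: "rational_rep n m \<rho>" and J: "J \<in> carrier_mat n n"
  shows "finite (quot_orbits n m \<rho> J) \<longleftrightarrow> finite ((\<lambda>w. semidirect_orbit n m \<rho> (J, w)) ` carrier_vec m)"
  unfolding quot_orbits_eq
  by (rule finite_image_iff_eq_fibres) (rule centralizer_orbit_eq_iff[OF inf rr J])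

section \<open>Nilpotent matrices are conjugate to Jordan matrices\<close>

lemma first_column_of_invertible_mat:
  fixes v :: "'k::field vec"
  assumes v: "v \<in> carrier_vec N" "v \<noteq> 0\<^sub>v N"
  obtains W where "W \<in> carrier_mat N N" and "det W \<noteq> 0" and "W *\<^sub>v unit_vec N 0 = v"
proof -
  obtain k where k: "k < N" "v $ k \<noteq> 0"
    using v by (metis eq_vecI carrier_vecD index_zero_vec)
  have N: "0 < N"
    using k by simp
  define W where "W = mat N N (\<lambda>(i, j). if j = 0 then v $ i
    else if j = k then (if i = 0 then 1 else 0) else (if i = j then 1 else 0))"
  have Wc: "W \<in> carrier_mat N N"
    unfolding W_def by simp
  have "W *\<^sub>v unit_vec N 0 = v"
    using v N by (intro eq_vecI) (auto simp: W_def)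
  moreover have "det W \<noteq> 0"
  proof
    assume "det W = 0"
    then obtain u where u: "u \<in> carrier_vec N" "u \<noteq> 0\<^sub>v N" "W *\<^sub>v u = 0\<^sub>v N"
      using det_0_iff_vec_prod_zero[OF Wc] by blast
    have Wu: "v $ i * u $ 0 + (if i = 0 \<and> k \<noteq> 0 then u $ k else 0)
        + (if i \<noteq> 0 \<and> i \<noteq> k then u $ i else 0) = 0" if i: "i < N" for i
    proof -
      have "0 = (W *\<^sub>v u) $ i"
        using u(3) i by simp
      also have "\<dots> = (\<Sum>j = 0..<N. W $$ (i, j) * u $ j)"
        using u(1) i Wc by (simp add: scalar_prod_def)
      also have "\<dots> = (\<Sum>j = 0..<N. (if j = 0 then v $ i * u $ 0 else 0)
          + (if j = k then (if k \<noteq> 0 \<and> i = 0 then u $ k else 0) else 0)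
          + (if j = i then (if i \<noteq> 0 \<and> i \<noteq> k then u $ i else 0) else 0))"
        by (intro sum.cong refl) (use i in \<open>auto simp: W_def\<close>)
      also have "\<dots> = v $ i * u $ 0 + (if i = 0 \<and> k \<noteq> 0 then u $ k else 0)
          + (if i \<noteq> 0 \<and> i \<noteq> k then u $ i else 0)"
        using N k i by (simp add: sum.distrib)
      finally show ?thesis ..
    qed
    have u0: "u $ 0 = 0"
      using Wu[OF N] Wu[OF k(1)] k by (cases "k = 0") auto
    have "u $ i = 0" if "i < N" for i
      using Wu[OF that] Wu[OF N] u0 by (cases "i = 0"; cases "i = k") auto
    then have "u = 0\<^sub>v N"
      using u(1) by (intro eq_vecI) auto
    with u(2) show False ..
  qed
  ultimately show thesis
    using that Wc by blast
qed

lemma pow_four_block_mat_upper: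
  assumes A1: "A1 \<in> carrier_mat a a" and A2: "A2 \<in> carrier_mat a b" and A3: "A3 \<in> carrier_mat b b"
  shows "\<exists>B \<in> carrier_mat a b.
    (four_block_mat A1 A2 (0\<^sub>m b a) A3) ^\<^sub>m k = four_block_mat (A1 ^\<^sub>m k) B (0\<^sub>m b a) (A3 ^\<^sub>m k)"
proof (induction k)
  case 0
  have "four_block_mat (1\<^sub>m a) (0\<^sub>m a b) (0\<^sub>m b a) (1\<^sub>m b) = (1\<^sub>m (a + b) :: 'a mat)"
    by simp
  then show ?case
    using A1 A3 by (intro bexI[of _ "0\<^sub>m a b"]) auto
next
  case (Suc k)
  then obtain B where B: "B \<in> carrier_mat a b"
    and IH: "(four_block_mat A1 A2 (0\<^sub>m b a) A3) ^\<^sub>m k = four_block_mat (A1 ^\<^sub>m k) B (0\<^sub>m b a) (A3 ^\<^sub>m k)"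
    by blast
  have A1k: "A1 ^\<^sub>m k \<in> carrier_mat a a" and A3k: "A3 ^\<^sub>m k \<in> carrier_mat b b"
    using A1 A3 by auto
  have "(four_block_mat A1 A2 (0\<^sub>m b a) A3) ^\<^sub>m Suc k
      = four_block_mat (A1 ^\<^sub>m k * A1 + B * 0\<^sub>m b a) (A1 ^\<^sub>m k * A2 + B * A3)
          (0\<^sub>m b a * A1 + A3 ^\<^sub>m k * 0\<^sub>m b a) (0\<^sub>m b a * A2 + A3 ^\<^sub>m k * A3)"
    unfolding pow_mat.simps(2) IH
    by (rule mult_four_block_mat[OF A1k B zero_carrier_mat A3k A1 A2 zero_carrier_mat A3])
  also have "\<dots> = four_block_mat (A1 ^\<^sub>m Suc k) (A1 ^\<^sub>m k * A2 + B * A3) (0\<^sub>m b a) (A3 ^\<^sub>m Suc k)"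
    using A1 A2 A3 A1k A3k B right_add_zero_mat[OF mult_carrier_mat[OF A1k A1]]
      left_add_zero_mat[OF mult_carrier_mat[OF A3k A3]]
    by simp
  finally show ?case
    using A1k A2 B A3 by (intro bexI[of _ "A1 ^\<^sub>m k * A2 + B * A3"]) auto
qed

lemma det_pow_mat: "A \<in> carrier_mat n n \<Longrightarrow> det (A ^\<^sub>m k) = det A ^ k"
  by (induction k) (auto simp: det_mult[of _ n])

lemma similar_mat_zero_first_column:
  fixes X :: "'k::field mat"
  assumes X: "X \<in> carrier_mat N N" and v: "v \<in> carrier_vec N" "v \<noteq> 0\<^sub>v N" "X *\<^sub>v v = 0\<^sub>v N"
  obtains A P Q where "similar_mat_wit X A P Q" and "A \<in> carrier_mat N N" and "\<And>i. i < N \<Longrightarrow> A $$ (i, 0) = 0"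
proof -
  obtain W where W: "W \<in> carrier_mat N N" and dW: "det W \<noteq> 0" and We: "W *\<^sub>v unit_vec N 0 = v"
    using first_column_of_invertible_mat[OF v(1,2)] by blast
  define Wi where "Wi = mat_inv W"
  have Wi: "Wi \<in> carrier_mat N N" and WWi: "W * Wi = 1\<^sub>m N" and WiW: "Wi * W = 1\<^sub>m N"
    unfolding Wi_def using mat_inv_carrier[OF W] mult_mat_inv[OF W dW] by auto
  define A where "A = Wi * X * W"
  have A: "A \<in> carrier_mat N N"
    unfolding A_def using Wi X W by simp
  have "W * A * Wi = (W * Wi) * X * (W * Wi)"
    unfolding A_def using W Wi X by (simp add: assoc_mult_mat[of _ N N _ N _ N])
  then have "X = W * A * Wi"
    using WWi X by simp
  then have XA: "similar_mat_wit X A W Wi"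
    by (intro similar_mat_witI[OF WWi WiW _ X A W Wi])
  have "A *\<^sub>v unit_vec N 0 = Wi *\<^sub>v (X *\<^sub>v v)"
    unfolding A_def We[symmetric] using Wi X W by (simp add: assoc_mult_mat_vec[of _ N N _ N])
  also have "\<dots> = 0\<^sub>v N"
    unfolding v(3) using Wi by (intro eq_vecI) auto
  finally have Ae0: "A *\<^sub>v unit_vec N 0 = 0\<^sub>v N" .
  have "A $$ (i, 0) = 0" if "i < N" for i
  proof -
    have "A $$ (i, 0) = (A *\<^sub>v unit_vec N 0) $ i"
      using that A by simp
    then show ?thesis
      unfolding Ae0 using that by simp
  qed
  with XA A that show thesis
    by blast
qed

lemma nilpotent_similar_zero_first_column:
  fixes X :: "'k::field mat"
  assumes X: "X \<in> carrier_mat (Suc n) (Suc n)" and Xk: "X ^\<^sub>m k = 0\<^sub>m (Suc n) (Suc n)"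
  obtains A2 A3 P Q where "similar_mat_wit X (four_block_mat (0\<^sub>m 1 1) A2 (0\<^sub>m n 1) A3) P Q"
    and "A2 \<in> carrier_mat 1 n" and "A3 \<in> carrier_mat n n" and "A3 ^\<^sub>m k = 0\<^sub>m n n"
proof -
  let ?N = "Suc n"
  have "det X ^ k = 0"
    using det_pow_mat[OF X, of k] Xk by simp
  then obtain v where "v \<in> carrier_vec ?N" "v \<noteq> 0\<^sub>v ?N" "X *\<^sub>v v = 0\<^sub>v ?N"
    using det_0_iff_vec_prod_zero[OF X] by auto
  then obtain A P Q where XA: "similar_mat_wit X A P Q" and A: "A \<in> carrier_mat ?N ?N"
    and col0: "\<And>i. i < ?N \<Longrightarrow> A $$ (i, 0) = 0"
    using similar_mat_zero_first_column[OF X] by blast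
  have Ak: "A ^\<^sub>m k = 0\<^sub>m ?N ?N"
    using similar_mat_wit_pow_id[OF similar_mat_wit_sym[OF XA], of k] Xk similar_mat_witD2[OF X XA]
    by simp
  obtain A1 A2 A0 A3 where sp: "split_block A 1 1 = (A1, A2, A0, A3)"
    by (cases "split_block A 1 1") auto
  have A2: "A2 \<in> carrier_mat 1 n" and A3: "A3 \<in> carrier_mat n n" and A_blocks: "A = four_block_mat A1 A2 A0 A3"
    using split_block[OF sp] A by auto
  have "A1 = 0\<^sub>m 1 1" and "A0 = 0\<^sub>m n 1"
    using sp A col0 unfolding split_block_def Let_def by (auto intro!: eq_matI)
  then have A_eq: "A = four_block_mat (0\<^sub>m 1 1) A2 (0\<^sub>m n 1) A3"
    using A_blocks by simp
  obtain B where B: "A ^\<^sub>m k = four_block_mat (0\<^sub>m 1 1 ^\<^sub>m k) B (0\<^sub>m n 1) (A3 ^\<^sub>m k)"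
    using pow_four_block_mat_upper[OF zero_carrier_mat A2 A3] unfolding A_eq by blast
  have "(A3 ^\<^sub>m k) $$ (i, j) = 0" if "i < n" "j < n" for i j
  proof -
    have "(0\<^sub>m 1 1 :: 'k mat) ^\<^sub>m k \<in> carrier_mat 1 1"
      by simp
    then have "(A3 ^\<^sub>m k) $$ (i, j) = (A ^\<^sub>m k) $$ (Suc i, Suc j)"
      unfolding B using that A3 by (simp del: pow_mat.simps)
    then show ?thesis
      using Ak that by simp
  qed
  then have "A3 ^\<^sub>m k = 0\<^sub>m n n"
    using A3 by (intro eq_matI) auto
  then show thesis
    using that XA A_eq A2 A3 by simp
qed

lemma nilpotent_similar_strictly_upper_triangular:
  fixes X :: "'k::field mat"
  assumes "X \<in> carrier_mat n n" and "X ^\<^sub>m k = 0\<^sub>m n n"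
  shows "\<exists>T. similar_mat X T \<and> T \<in> carrier_mat n n \<and> upper_triangular T \<and> (\<forall>i < n. T $$ (i, i) = 0)"
  using assms
proof (induction n arbitrary: X)
  case 0
  then show ?case
    using similar_mat_refl[of X 0] by (auto simp: upper_triangular_def)
next
  case (Suc n)
  obtain A2 A3 P Q where XA: "similar_mat_wit X (four_block_mat (0\<^sub>m 1 1) A2 (0\<^sub>m n 1) A3) P Q"
    and A2: "A2 \<in> carrier_mat 1 n" and A3: "A3 \<in> carrier_mat n n" and A3k: "A3 ^\<^sub>m k = 0\<^sub>m n n"
    using nilpotent_similar_zero_first_column[OF Suc.prems] by blast
  obtain T3 where "similar_mat A3 T3" and T3: "T3 \<in> carrier_mat n n" and ut3: "upper_triangular T3"
    and d3: "\<forall>i < n. T3 $$ (i, i) = 0"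
    using Suc.IH[OF A3 A3k] by blast
  then obtain P3 Q3 where AT3: "similar_mat_wit A3 T3 P3 Q3"
    unfolding similar_mat_def by blast
  then have P3: "P3 \<in> carrier_mat n n" and Q3: "Q3 \<in> carrier_mat n n" and PQ3: "P3 * Q3 = 1\<^sub>m n"
    using similar_mat_witD2[OF A3] by auto
  define T where "T = four_block_mat (0\<^sub>m 1 1) (A2 * P3) (0\<^sub>m n 1) T3"
  have "A2 = 1\<^sub>m 1 * (A2 * P3) * Q3"
    using A2 P3 Q3 PQ3 by (simp add: assoc_mult_mat[of _ 1 n _ n _ n])
  moreover have "0\<^sub>m n 1 = P3 * 0\<^sub>m n 1 * 1\<^sub>m 1"
    using P3 by simp
  ultimately have "similar_mat_wit (four_block_mat (0\<^sub>m 1 1) A2 (0\<^sub>m n 1) A3) T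
      (four_block_mat (1\<^sub>m 1) (0\<^sub>m 1 n) (0\<^sub>m n 1) P3) (four_block_mat (1\<^sub>m 1) (0\<^sub>m 1 n) (0\<^sub>m n 1) Q3)"
    unfolding T_def using A2 A3 P3
    by (intro similar_mat_wit_four_block[OF similar_mat_wit_refl AT3]) auto
  then have "similar_mat X T"
    using XA similar_mat_wit_trans unfolding similar_mat_def by blast
  moreover have "T \<in> carrier_mat (Suc n) (Suc n)"
    unfolding T_def using four_block_carrier_mat[OF zero_carrier_mat[of 1 1] T3] by simp
  moreover have "upper_triangular T"
    unfolding T_def using A2 P3 T3 ut3 by (intro upper_triangular_four_block) auto
  moreover have "\<forall>i < Suc n. T $$ (i, i) = 0"
    unfolding T_def using A2 P3 T3 d3 by (auto simp: less_Suc_eq_0_disj)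
  ultimately show ?case
    by blast
qed

lemma J_mat_diag_block_mat: "J_mat ks = diag_block_mat (map (\<lambda>k. jordan_block k 0) ks)"
  unfolding J_mat_def jordan_matrix_def by (simp add: o_def)

lemma J_mat_dims:
  "dim_row (J_mat ks :: 'k::field mat) = sum_list ks" "dim_col (J_mat ks :: 'k::field mat) = sum_list ks"
proof -
  have "sum_list (map dim_row (map (\<lambda>k. jordan_block k (0::'k)) ks)) = sum_list ks"
    and "sum_list (map dim_col (map (\<lambda>k. jordan_block k (0::'k)) ks)) = sum_list ks"
    by (induction ks) auto
  then show "dim_row (J_mat ks :: 'k mat) = sum_list ks" "dim_col (J_mat ks :: 'k mat) = sum_list ks"
    unfolding J_mat_diag_block_mat dim_diag_block_mat by auto
qed

lemma J_mat_carrier: "(J_mat ks :: 'k::field mat) \<in> carrier_mat (sum_list ks) (sum_list ks)"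
  by (rule carrier_matI; rule J_mat_dims)

lemma J_mat_partition_carrier: "ps \<in> partitions n \<Longrightarrow> (J_mat ps :: 'k::field mat) \<in> carrier_mat n n"
  using J_mat_carrier[of ps] unfolding partitions_def by simp

lemma J_mat_Cons:
  "(J_mat (k # ks) :: 'k::field mat) =
    four_block_mat (jordan_block k 0) (0\<^sub>m k (sum_list ks)) (0\<^sub>m (sum_list ks) k) (J_mat ks)"
proof -
  have "(J_mat (k # ks) :: 'k mat) = four_block_mat (jordan_block k 0)
      (0\<^sub>m (dim_row (jordan_block k (0::'k))) (dim_col (J_mat ks :: 'k mat)))
      (0\<^sub>m (dim_row (J_mat ks :: 'k mat)) (dim_col (jordan_block k (0::'k)))) (J_mat ks)"
    unfolding J_mat_diag_block_mat by (simp only: list.map diag_block_mat.simps Let_def)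
  then show ?thesis
    unfolding J_mat_dims using jordan_block_carrier[of k "0::'k"] by simp
qed

lemma J_mat_single: "J_mat [k] = jordan_block k 0"
  unfolding J_mat_diag_block_mat by (simp only: list.map diag_block_mat_singleton)

lemma J_mat_append:
  "(J_mat (ks @ ls) :: 'k::field mat) =
    four_block_mat (J_mat ks) (0\<^sub>m (sum_list ks) (sum_list ls)) (0\<^sub>m (sum_list ls) (sum_list ks)) (J_mat ls)"
  unfolding J_mat_diag_block_mat diag_block_mat_append map_append Let_def
  by (simp add: J_mat_dims[unfolded J_mat_diag_block_mat])

lemma similar_mat_four_block_swap:
  fixes A :: "'k::field mat"
  assumes A: "A \<in> carrier_mat a a" and B: "B \<in> carrier_mat b b"
  shows "similar_mat (four_block_mat A (0\<^sub>m a b) (0\<^sub>m b a) B) (four_block_mat B (0\<^sub>m b a) (0\<^sub>m a b) A)"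
proof -
  define P :: "'k mat" where "P = four_block_mat (0\<^sub>m a b) (1\<^sub>m a) (1\<^sub>m b) (0\<^sub>m b a)"
  define Q :: "'k mat" where "Q = four_block_mat (0\<^sub>m b a) (1\<^sub>m b) (1\<^sub>m a) (0\<^sub>m a b)"
  have z1: "(0\<^sub>m a b :: 'k mat) \<in> carrier_mat a b" and z2: "(0\<^sub>m b a :: 'k mat) \<in> carrier_mat b a"
    and o1: "(1\<^sub>m a :: 'k mat) \<in> carrier_mat a a" and o2: "(1\<^sub>m b :: 'k mat) \<in> carrier_mat b b"
    by auto
  have PQ: "P * Q = 1\<^sub>m (a + b)"
    unfolding P_def Q_def by (subst mult_four_block_mat[OF z1 o1 o2 z2 z2 o2 o1 z1]) simp
  have QP: "Q * P = 1\<^sub>m (a + b)"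
    unfolding P_def Q_def by (subst mult_four_block_mat[OF z2 o2 o1 z1 z1 o1 o2 z2]) (simp add: add.commute)
  have PB: "P * four_block_mat B (0\<^sub>m b a) (0\<^sub>m a b) A = four_block_mat (0\<^sub>m a b) A B (0\<^sub>m b a)"
    unfolding P_def by (subst mult_four_block_mat[OF z1 o1 o2 z2 B z2 z1 A]) (use A B in simp)
  have swap: "four_block_mat A (0\<^sub>m a b) (0\<^sub>m b a) B = P * four_block_mat B (0\<^sub>m b a) (0\<^sub>m a b) A * Q"
    unfolding PB Q_def by (subst mult_four_block_mat[OF z1 A B z2 z2 o2 o1 z1]) (use A B in simp)
  have "four_block_mat B (0\<^sub>m b a) (0\<^sub>m a b) A \<in> carrier_mat (a + b) (a + b)"
    using four_block_carrier_mat[OF B A] by (simp add: add.commute)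
  moreover have "P \<in> carrier_mat (a + b) (a + b)" and "Q \<in> carrier_mat (a + b) (a + b)"
    unfolding P_def Q_def using four_block_carrier_mat[OF z1 z2] four_block_carrier_mat[OF z2 z1]
    by (simp_all add: add.commute)
  ultimately show ?thesis
    unfolding similar_mat_def using similar_mat_witI[OF PQ QP swap] A B by auto
qed

lemma J_mat_similar_mset:
  "mset ks = mset ls \<Longrightarrow> similar_mat (J_mat ks :: 'k::field mat) (J_mat ls)"
proof (induction ks arbitrary: ls)
  case Nil
  then show ?case
    using similar_mat_refl[OF J_mat_carrier[of "[]"]] by simp
next
  case (Cons k ks)
  then obtain l1 l2 where ls: "ls = l1 @ k # l2"
    by (metis list.set_intros(1) set_mset_mset split_list)
  have ms: "mset ks = mset (l1 @ l2)"
    using Cons.prems ls by simp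
  then have sum_eq: "sum_list ks = sum_list (l1 @ l2)"
    by (metis sum_mset_sum_list)
  have move_past_ks: "similar_mat (J_mat (k # ks) :: 'k mat) (J_mat (k # l1 @ l2))"
    unfolding J_mat_Cons sum_eq[symmetric]
    by (rule similar_mat_four_block_0_0[OF similar_mat_refl[OF jordan_block_carrier] Cons.IH[OF ms]
          jordan_block_carrier J_mat_carrier])
  have "similar_mat (J_mat (k # l1) :: 'k mat) (J_mat (l1 @ [k]))"
    using similar_mat_four_block_swap[OF jordan_block_carrier J_mat_carrier, of k 0 l1]
    unfolding J_mat_Cons[of k l1] J_mat_append J_mat_single by simp
  moreover have "sum_list (l1 @ [k]) = sum_list (k # l1)"
    by simp
  ultimately have "similar_mat (J_mat ((k # l1) @ l2) :: 'k mat) (J_mat ((l1 @ [k]) @ l2))"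
    unfolding J_mat_append[of "k # l1"] J_mat_append[of "l1 @ [k]"]
    by (metis similar_mat_four_block_0_0 similar_mat_refl J_mat_carrier)
  with move_past_ks show ?case
    unfolding ls using similar_mat_trans by fastforce
qed

lemma jordan_nf_eigenvalues_zero:
  fixes T :: "'k::field mat"
  assumes jnf: "jordan_nf T n_as" and cp: "char_poly T = [:0, 1:] ^ n" and "(k, a) \<in> set n_as"
  shows "a = 0"
proof -
  have "k \<noteq> 0"
    using jnf assms(3) unfolding jordan_nf_def by (metis fst_conv image_eqI)
  then have "poly ([:- a, 1:] ^ k) a = 0"
    by (simp add: poly_power)
  moreover have "poly ([:- a, 1:] ^ k) a \<in> set (map (\<lambda>q. poly q a) (map (\<lambda>(n, a). [:- a, 1:] ^ n) n_as))"
    using assms(3) by force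
  ultimately have "poly (char_poly T) a = 0"
    unfolding jordan_nf_char_poly[OF jnf] poly_prod_list prod_list_zero_iff by metis
  then show ?thesis
    unfolding cp by (simp add: poly_power)
qed

lemma nilpotent_similar_J_mat:
  fixes X :: "'k::field mat"
  assumes X: "X \<in> carrier_mat n n" and Xk: "X ^\<^sub>m k = 0\<^sub>m n n"
  obtains ks where "similar_mat X (J_mat ks)" and "0 \<notin> set ks" and "sum_list ks = n"
proof -
  obtain T where XT: "similar_mat X T" and T: "T \<in> carrier_mat n n" and ut: "upper_triangular T"
    and d0: "\<forall>i < n. T $$ (i, i) = 0"
    using nilpotent_similar_strictly_upper_triangular[OF X Xk] by blast
  define n_as where "n_as = triangular_to_jnf_vector T"
  have jnf: "jordan_nf T n_as"
    unfolding n_as_def by (rule triangular_to_jnf_vector[OF T ut])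
  have "diag_mat T = replicate n 0"
    unfolding diag_mat_def using T d0 by (intro nth_equalityI) auto
  then have "char_poly T = [:0, 1:] ^ n"
    using char_poly_upper_triangular[OF T ut] by simp
  then have "map (\<lambda>k. (k, 0)) (map fst n_as) = n_as"
    unfolding map_map o_def using jordan_nf_eigenvalues_zero[OF jnf]
    by (intro map_idI) (metis prod.collapse)
  then have J: "J_mat (map fst n_as) = jordan_matrix n_as"
    unfolding J_mat_def by simp
  have sim: "similar_mat X (J_mat (map fst n_as))"
    unfolding J using XT jnf similar_mat_trans unfolding jordan_nf_def by blast
  obtain n' P Q where "{X, J_mat (map fst n_as), P, Q} \<subseteq> carrier_mat n' n'"
    using similar_matD[OF sim] by blast
  then have "sum_list (map fst n_as) = n"
    using X J_mat_carrier[of "map fst n_as"] by (metis carrier_matD(1) insert_subset)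
  moreover have "0 \<notin> set (map fst n_as)"
    using jnf unfolding jordan_nf_def by simp
  ultimately show thesis
    using that sim by blast
qed

lemma nilpotent_conj_J_mat:
  fixes X :: "'k::field mat"
  assumes X: "X \<in> carrier_mat n n" and Xk: "X ^\<^sub>m k = 0\<^sub>m n n"
  obtains ps g where "ps \<in> partitions n" and "g \<in> GL n" and "J_mat ps * g = g * X"
proof -
  obtain ks where sim: "similar_mat X (J_mat ks)" and ks0: "0 \<notin> set ks" and n: "sum_list ks = n"
    using nilpotent_similar_J_mat[OF X Xk] by blast
  define ps where "ps = rev (sort ks)"
  have ms: "mset ks = mset ps"
    unfolding ps_def by simp
  have "sorted_wrt (\<ge>) ps"
    unfolding ps_def sorted_wrt_rev by simp
  moreover have "\<forall>x \<in> set ps. 0 < x"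
    using ks0 unfolding ps_def by (auto intro: gr0I)
  moreover have "sum_list ps = n"
    using n ms by (metis sum_mset_sum_list)
  ultimately have ps: "ps \<in> partitions n"
    unfolding partitions_def by blast
  from similar_mat_trans[OF sim J_mat_similar_mset[OF ms]]
  obtain P Q where "similar_mat_wit X (J_mat ps) P Q"
    unfolding similar_mat_def by blast
  then have P: "P \<in> carrier_mat n n" and Q: "Q \<in> carrier_mat n n" and PQ: "P * Q = 1\<^sub>m n"
    and QP: "Q * P = 1\<^sub>m n" and XP: "X = P * J_mat ps * Q"
    using similar_mat_witD2[OF X] by auto
  have J: "J_mat ps \<in> carrier_mat n n"
    using J_mat_partition_carrier[OF ps] .
  have "Q * X = (Q * P) * J_mat ps * Q"
    unfolding XP assoc_mult_mat[symmetric, OF Q mult_carrier_mat[OF P J] Q] assoc_mult_mat[symmetric, OF Q P J] ..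
  then have "J_mat ps * Q = Q * X"
    unfolding QP left_mult_one_mat[OF J] ..
  moreover have "Q \<in> GL n"
    using Q PQ det_mult[OF P Q] by (auto simp: GL_iff_det)
  ultimately show thesis
    using that ps by blast
qed

lemma J_mat_nilcone: "ps \<in> partitions n \<Longrightarrow> (J_mat ps :: 'k::field mat) \<in> nilcone n"
proof -
  assume ps: "ps \<in> partitions n"
  then have n: "sum_list ps = n"
    unfolding partitions_def by simp
  have "jordan_block k (0::'k) ^\<^sub>m n = 0\<^sub>m k k" if "k \<in> set ps" for k
    using member_le_sum_list[OF that] n unfolding jordan_block_zero_pow by (intro eq_matI) auto
  then have "(J_mat ps :: 'k mat) ^\<^sub>m n = diag_block_mat (map (\<lambda>k. 0\<^sub>m k k) ps)"
    unfolding J_mat_def jordan_matrix_pow by (simp add: o_def cong: map_cong)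
  also have "\<dots> = 0\<^sub>m n n"
    unfolding n[symmetric] by (induction ps) (simp_all add: Let_def)
  finally show ?thesis
    unfolding nilcone_def using J_mat_carrier[of ps] n by blast
qed

lemma partitions_finite: "finite (partitions n)"
proof (rule finite_subset)
  show "partitions n \<subseteq> {xs. set xs \<subseteq> {..n} \<and> length xs \<le> n}"
  proof
    fix ps assume "ps \<in> partitions n"
    then have pos: "\<forall>x \<in> set ps. 0 < x" and n: "sum_list ps = n"
      unfolding partitions_def by auto
    have "length ps \<le> sum_list ps"
      using pos by (induction ps) auto
    then show "ps \<in> {xs. set xs \<subseteq> {..n} \<and> length xs \<le> n}"
      using member_le_sum_list[of _ ps] n by auto
  qed
  show "finite {xs. set xs \<subseteq> {..n} \<and> length xs \<le> n}"
    by (rule finite_lists_length_le) simp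
qed

lemma nilcone_semidirect_orbits:
  fixes \<rho> :: "'k::field mat \<Rightarrow> 'k mat"
  assumes inf: "infinite (UNIV :: 'k set)" and rr: "rational_rep n m \<rho>"
  shows "semidirect_orbit n m \<rho> ` (nilcone n \<times> carrier_vec m)
    = (\<Union>ps \<in> partitions n. (\<lambda>w. semidirect_orbit n m \<rho> (J_mat ps, w)) ` carrier_vec m)"
proof (intro equalityI subsetI)
  fix S assume "S \<in> semidirect_orbit n m \<rho> ` (nilcone n \<times> carrier_vec m)"
  then obtain X w k where X: "X \<in> carrier_mat n n" and Xk: "X ^\<^sub>m k = 0\<^sub>m n n" and w: "w \<in> carrier_vec m"
    and S: "S = semidirect_orbit n m \<rho> (X, w)"
    unfolding nilcone_def by blast
  obtain ps g where ps: "ps \<in> partitions n" and g: "g \<in> GL n" and Jg: "J_mat ps * g = g * X"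
    using nilpotent_conj_J_mat[OF X Xk] by blast
  have J: "J_mat ps \<in> carrier_mat n n"
    using J_mat_partition_carrier[OF ps] .
  have "semidirect_orbit n m \<rho> (J_mat ps, \<rho> g *\<^sub>v w) = S"
    unfolding S using semidirect_orbit_eq[OF inf rr semidirect_orbit_conj[OF inf rr g J Jg] X w] .
  moreover have "\<rho> g *\<^sub>v w \<in> carrier_vec m"
    using rep_carrier[OF rr g] w by simp
  ultimately show "S \<in> (\<Union>ps \<in> partitions n. (\<lambda>w. semidirect_orbit n m \<rho> (J_mat ps, w)) ` carrier_vec m)"
    using ps by blast
next
  fix S assume "S \<in> (\<Union>ps \<in> partitions n. (\<lambda>w. semidirect_orbit n m \<rho> (J_mat ps, w)) ` carrier_vec m)"
  then show "S \<in> semidirect_orbit n m \<rho> ` (nilcone n \<times> carrier_vec m)"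
    using J_mat_nilcone by blast
qed

theorem lemma1p2:
  fixes n m :: nat and \<rho> :: "'k::field mat \<Rightarrow> 'k mat"
  assumes "alg_closed TYPE('k)"
    and "rational_rep n m \<rho>"
  shows "(\<forall>ps \<in> partitions n. \<forall>w \<in> carrier_vec m. \<forall>u \<in> JM n m \<rho> (J_mat ps).
            (J_mat ps, w + u) \<in> semidirect_orbit n m \<rho> (J_mat ps, w))
       \<and> (finite (semidirect_orbit n m \<rho> ` (nilcone n \<times> carrier_vec m)) \<longleftrightarrow>
            (\<forall>ps \<in> partitions n. finite (quot_orbits n m \<rho> (J_mat ps))))"
proof
  have inf: "infinite (UNIV :: 'k set)"
    using alg_closed_infinite[OF assms(1)] .
  show "\<forall>ps \<in> partitions n. \<forall>w \<in> carrier_vec m. \<forall>u \<in> JM n m \<rho> (J_mat ps).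
      (J_mat ps, w + u) \<in> semidirect_orbit n m \<rho> (J_mat ps, w)"
    unfolding JM_def using semidirect_orbit_translate[OF inf assms(2) J_mat_partition_carrier] by blast
  show "finite (semidirect_orbit n m \<rho> ` (nilcone n \<times> carrier_vec m)) \<longleftrightarrow>
      (\<forall>ps \<in> partitions n. finite (quot_orbits n m \<rho> (J_mat ps)))"
    unfolding nilcone_semidirect_orbits[OF inf assms(2)] finite_UN[OF partitions_finite]
    using finite_quot_orbits_iff[OF inf assms(2) J_mat_partition_carrier] by blast
qed

end
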